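(* $\mathrm{Cond}(\mathrm{Rel}^+)\cong\mathrm{Rel}$. Explicitly, a morphism $(K,R,k_0):X\leadsto Y$ with $R\subseteq X\times Y\times K$ left-total in $X$ corresponds to the relation $R'=\{(x,y):(x,y,k_0)\in R\}\subseteq X\times Y$, and a relation $R'\subseteq X\times Y$ corresponds to $(\{0,1\},R'',1)$ with $(x,y,b)\in R''$ iff ($(x,y)\in R'\Leftrightarrow b=1$); these assignments are mutually inverse on $\approx$-classes.
   Context: $\mathrm{Rel}$: the CD category of sets and arbitrary relations $R\subseteq X\times Y$ (Kleisli category of the powerset monad), with relational composition, cartesian product as tensor, copy the diagonal relation and delete the total relation to a one-point set. $\mathrm{Rel}^+$: its Markov subcategory of left-total relations ($\forall x\,\exists y,\ (x,y)\in R$). Deterministic states $I\to K$ of $\mathrm{Rel}^+$ are single points $k_0\in K$. $\mathrm{Rel}^+$ has conditionals and precise supports; for a state (nonempty subset) $M\subseteq X$ and point $x$, $x\ll M$ iff $x\in M$. $\mathrm{Obs}(\mathcal C)$ for a Markov category $\mathcal C$: same objects; morphisms $X\leadsto Y$ are triples $(K,f,o)$ with $f:X\to Y\otimes K$ and $o:I\to K$ deterministic; composition $(K',f',o')\bullet(K,f,o)=(K'\otimes K,(f'\otimes\mathrm{id}_K)f,o'\otimes o)$; tensor of $(K,f,o):X\leadsto Y$, $(K',f',o'):X'\leadsto Y'$ is $(K'\otimes K,(\mathrm{id}_{Y'}\otimes\mathrm{swap}_{K',Y}\otimes\mathrm{id}_K)(f'\otimes f),o'\otimes o)$. Here $f_X$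 denotes the marginal, and for a state $\psi:I\to X\otimes K$, $\psi|_K:K\to X$ is a conditional, i.e. $\psi=\mathrm{swap}\,(\mathrm{id}_K\otimes\psi|_K)\mathrm{copy}_K\,\psi_K$. For states, $(K,\psi,o)\sim(K',\psi',o')$ iff either ($o\ll\psi_K$, $o'\ll\psi'_{K'}$ and $\psi|_Ko=\psi'|_{K'}o'$) or ($o\not\ll\psi_K$ and $o'\not\ll\psi'_{K'}$). For $F,G:X\leadsto Y$, $F\approx G$ iff for every $A$ and every state $\Psi:I\leadsto A\otimes X$, $(\mathrm{Id}_A\otimes F)\bullet\Psi\sim(\mathrm{Id}_A\otimes G)\bullet\Psi$. $\mathrm{Cond}(\mathcal C)=\mathrm{Obs}(\mathcal C)/{\approx}$, a CD category. *)

theory Defs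
  imports Main
begin

text \<open>Objects of Rel / Rel+ are carrier sets.  A morphism X -> Y of Rel is a
relation R \<subseteq> X \<times> Y; in Rel+ it is additionally left-total on X.
The monoidal unit I is the one-point set {()}.\<close>

definition relplus_mor :: "'x set \<Rightarrow> 'y set \<Rightarrow> ('x \<times> 'y) set \<Rightarrow> bool" where
  "relplus_mor X Y R \<longleftrightarrow> R \<subseteq> X \<times> Y \<and> (\<forall>x\<in>X. \<exists>y. (x, y) \<in> R)"

text \<open>Morphisms X ~> Y of Obs(Rel+): triples (K, f, p) with f : X -> Y \<otimes> K in Rel+
(encoded as a set of triples (x, y, k)) and p : I -> K deterministic, i.e. a point p \<in> K.\<close>

type_synonym ('k, 'x, 'y) obs = "'k set \<times> ('x \<times> 'y \<times> 'k) set \<times> 'k"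

definition obs_mor :: "'x set \<Rightarrow> 'y set \<Rightarrow> ('k, 'x, 'y) obs \<Rightarrow> bool" where
  "obs_mor X Y F = (case F of (K, f, p) \<Rightarrow>
      relplus_mor X (Y \<times> K) {(x, y, k). (x, y, k) \<in> f} \<and> p \<in> K)"

text \<open>Composition (K',f',p') \<bullet> (K,f,p) = (K' \<otimes> K, (f' \<otimes> id_K) f, p' \<otimes> p).\<close>
definition obs_comp :: "('k2, 'y, 'z) obs \<Rightarrow> ('k1, 'x, 'y) obs \<Rightarrow> ('k2 \<times> 'k1, 'x, 'z) obs" where
  "obs_comp G F = (case G of (K', g, p') \<Rightarrow> case F of (K, f, p) \<Rightarrow>
      (K' \<times> K, {(x, z, (k', k)). \<exists>y. (x, y, k) \<in> f \<and> (y, z, k') \<in> g}, (p', p)))"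

definition obs_id :: "'x set \<Rightarrow> (unit, 'x, 'x) obs" where
  "obs_id X = ({()}, {(x, x, ()) | x. x \<in> X}, ())"

text \<open>Tensor of (K,f,p) : X ~> Y and (K',f',p') : X' ~> Y': hidden object K \<otimes> K',
with the hidden outputs moved to the right (the order of the hidden factors is
immaterial up to the evident isomorphism).\<close>
definition obs_tensor :: "('k1, 'x1, 'y1) obs \<Rightarrow> ('k2, 'x2, 'y2) obs
      \<Rightarrow> ('k1 \<times> 'k2, 'x1 \<times> 'x2, 'y1 \<times> 'y2) obs" where
  "obs_tensor F F' = (case F of (K, f, p) \<Rightarrow> case F' of (K', f', p') \<Rightarrow>
      (K \<times> K', {((x, x'), (y, y'), (k, k')). (x, y, k) \<in> f \<and> (x', y', k') \<in> f'}, (p, p')))"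

definition obs_copy :: "'x set \<Rightarrow> (unit, 'x, 'x \<times> 'x) obs" where
  "obs_copy X = ({()}, {(x, (x, x), ()) | x. x \<in> X}, ())"

definition obs_del :: "'x set \<Rightarrow> (unit, 'x, unit) obs" where
  "obs_del X = ({()}, {(x, (), ()) | x. x \<in> X}, ())"

text \<open>States I ~> B of Obs(Rel+) are obs_mor {()} B.  Marginal on the hidden object:\<close>
definition state_marg :: "(unit \<times> 'b \<times> 'k) set \<Rightarrow> 'k set" where
  "state_marg psi = {k. \<exists>b. ((), b, k) \<in> psi}"

text \<open>c : K -> B (in Rel+) is a conditional of psi : I -> B \<otimes> K, i.e.
psi = swap (id_K \<otimes> c) copy_K psi_K.\<close>
definition is_conditional :: "'b set \<Rightarrow> 'k set \<Rightarrow> (unit \<times> 'b \<times> 'k) set \<Rightarrow> ('k \<times> 'b) set \<Rightarrow> bool" where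
  "is_conditional B K psi c \<longleftrightarrow> relplus_mor K B c \<and>
     psi = {((), b, k) | b k. k \<in> state_marg psi \<and> (k, b) \<in> c}"

text \<open>The relation ~ on states I ~> B.  In Rel+, p \<ll> M iff p \<in> M, and the
composite of a conditional c with a point p is the image c``{p}.\<close>
definition state_sim :: "'b set \<Rightarrow> ('k, unit, 'b) obs \<Rightarrow> ('k', unit, 'b) obs \<Rightarrow> bool" where
  "state_sim B S S' = (case S of (K, psi, p) \<Rightarrow> case S' of (K', psi', p') \<Rightarrow>
      (p \<in> state_marg psi \<and> p' \<in> state_marg psi' \<and>
        (\<exists>c c'. is_conditional B K psi c \<and> is_conditional B K' psi' c' \<and> c `` {p} = c' `` {p'}))
    \<or> (p \<notin> state_marg psi \<and> p' \<notin> state_marg psi'))"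

text \<open>The object A ranges over subsets of
the type 'a and the hidden object of Psi over subsets of the type 'c; these types
are parameters (fixed via itself-arguments, universally quantified at theorem level).\<close>
definition obs_approx :: "'a itself \<Rightarrow> 'c itself \<Rightarrow> 'x set \<Rightarrow> 'y set
      \<Rightarrow> ('k1, 'x, 'y) obs \<Rightarrow> ('k2, 'x, 'y) obs \<Rightarrow> bool" where
  "obs_approx _ _ X Y F G \<longleftrightarrow>
     (\<forall>(A :: 'a set) (Psi :: ('c, unit, 'a \<times> 'x) obs).
        obs_mor {()} (A \<times> X) Psi \<longrightarrow>
        state_sim (A \<times> Y) (obs_comp (obs_tensor (obs_id A) F) Psi)
                          (obs_comp (obs_tensor (obs_id A) G) Psi))"

definition to_rel :: "('k, 'x, 'y) obs \<Rightarrow> ('x \<times> 'y) set" where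
  "to_rel F = (case F of (K, R, k0) \<Rightarrow> {(x, y). (x, y, k0) \<in> R})"

definition from_rel :: "'x set \<Rightarrow> 'y set \<Rightarrow> ('x \<times> 'y) set \<Rightarrow> (nat, 'x, 'y) obs" where
  "from_rel X Y R' = ({0, 1},
     {(x, y, b). x \<in> X \<and> y \<in> Y \<and> b \<in> {0, 1} \<and> ((x, y) \<in> R' \<longleftrightarrow> b = 1)}, 1)"

definition rel_tensor :: "('x1 \<times> 'y1) set \<Rightarrow> ('x2 \<times> 'y2) set \<Rightarrow> (('x1 \<times> 'x2) \<times> ('y1 \<times> 'y2)) set" where
  "rel_tensor R S = {((x, x'), (y, y')). (x, y) \<in> R \<and> (x', y') \<in> S}"

end

theory Submission
  imports Defs
begin

text \<open>In Rel+ a state is determined by its conditional evaluated at the point, and that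
evaluation is just the fibre of the state over the point, i.e. the image of () under the
relation extracted by to_rel.  Since to_rel is compatible with composition, tensor and
identities, the observed state of (Id_A \<otimes> F) \<bullet> Psi is the fibre of Psi post-composed with
Id_A \<otimes> to_rel F.  So F \<approx> G whenever to_rel F = to_rel G; conversely, testing against the
point states ((a, x), c) recovers the whole of to_rel F.\<close>

lemma obs_mor_iff:
  "obs_mor X Y (K, f, p) \<longleftrightarrow>
     f \<subseteq> X \<times> Y \<times> K \<and> (\<forall>x\<in>X. \<exists>y k. (x, y, k) \<in> f) \<and> p \<in> K"
  unfolding obs_mor_def relplus_mor_def by auto

lemma obs_mor_obs_id: "obs_mor X X (obs_id X)"
  unfolding obs_id_def obs_mor_iff by auto

lemma obs_mor_obs_comp:
  assumes "obs_mor X Y F" and "obs_mor Y Z G"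
  shows "obs_mor X Z (obs_comp G F)"
proof -
  obtain K f p K' g p' where F: "F = (K, f, p)" and G: "G = (K', g, p')" by (cases F, cases G)
  show ?thesis using assms unfolding F G obs_comp_def prod.case obs_mor_iff by fastforce
qed

lemma obs_mor_obs_tensor:
  assumes "obs_mor X Y F" and "obs_mor X' Y' F'"
  shows "obs_mor (X \<times> X') (Y \<times> Y') (obs_tensor F F')"
proof -
  obtain K f p K' f' p' where F: "F = (K, f, p)" and F': "F' = (K', f', p')"
    by (cases F, cases F')
  show ?thesis using assms unfolding F F' obs_tensor_def prod.case obs_mor_iff by fastforce
qed

lemma to_rel_obs_comp: "to_rel (obs_comp G F) = to_rel F O to_rel G"
  unfolding to_rel_def obs_comp_def by (cases F, cases G) auto

lemma to_rel_obs_tensor: "to_rel (obs_tensor F F') = rel_tensor (to_rel F) (to_rel F')"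
  unfolding to_rel_def obs_tensor_def rel_tensor_def by (cases F, cases F') auto

lemma to_rel_obs_id: "to_rel (obs_id X) = Id_on X"
  unfolding to_rel_def obs_id_def by auto

lemma to_rel_obs_copy: "to_rel (obs_copy X) = {(x, (x, x)) | x. x \<in> X}"
  unfolding to_rel_def obs_copy_def by auto

lemma to_rel_obs_del: "to_rel (obs_del X) = X \<times> {()}"
  unfolding to_rel_def obs_del_def by auto

lemma to_rel_subset:
  assumes "obs_mor X Y F"
  shows "to_rel F \<subseteq> X \<times> Y"
  using assms unfolding to_rel_def by (cases F) (auto simp: obs_mor_iff)

lemma obs_mor_from_rel:
  assumes "X = {} \<or> Y \<noteq> {}"
  shows "obs_mor X Y (from_rel X Y R)"
proof -
  have "\<exists>y b. y \<in> Y \<and> b \<in> {0::nat, 1} \<and> ((x, y) \<in> R \<longleftrightarrow> b = 1)" if "x \<in> X" for x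
  proof -
    from assms that obtain y where "y \<in> Y" by auto
    then show ?thesis by (cases "(x, y) \<in> R") auto
  qed
  then show ?thesis unfolding from_rel_def obs_mor_iff by auto
qed

lemma to_rel_from_rel:
  assumes "R \<subseteq> X \<times> Y"
  shows "to_rel (from_rel X Y R) = R"
  using assms unfolding to_rel_def from_rel_def by auto

lemma to_rel_Image_empty_iff:
  "to_rel (K, psi, p) `` {()} = {} \<longleftrightarrow> p \<notin> state_marg psi"
  unfolding state_marg_def to_rel_def by auto

lemma is_conditional_Image:
  assumes "is_conditional B K psi c" and "p \<in> state_marg psi"
  shows "c `` {p} = to_rel (K, psi, p) `` {()}"
proof -
  have psi: "psi = {((), b, k) | b k. k \<in> state_marg psi \<and> (k, b) \<in> c}"
    using assms(1) unfolding is_conditional_def by blast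
  have "((), b, p) \<in> psi \<longleftrightarrow> (p, b) \<in> c" for b
    using assms(2) by (subst psi) blast
  then show ?thesis unfolding to_rel_def by auto
qed

text \<open>Outside the marginal the conditional is arbitrary; the point b0 makes it left-total.\<close>
lemma is_conditional_fibres:
  assumes "obs_mor {()} B (K, psi, p)" and "b0 \<in> B"
  shows "is_conditional B K psi
           ({(k, b). ((), b, k) \<in> psi} \<union> {(k, b0) | k. k \<in> K \<and> k \<notin> state_marg psi})"
  using assms unfolding obs_mor_iff is_conditional_def relplus_mor_def state_marg_def
  by auto

lemma state_sim_triple_iff:
  assumes S: "obs_mor {()} B (K, psi, p)" and S': "obs_mor {()} B (K', psi', p')"
    and "B \<noteq> {}"
  shows "state_sim B (K, psi, p) (K', psi', p') \<longleftrightarrow>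
           to_rel (K, psi, p) `` {()} = to_rel (K', psi', p') `` {()}"
proof
  assume "state_sim B (K, psi, p) (K', psi', p')"
  then consider
      (marg) c c' where "p \<in> state_marg psi" "p' \<in> state_marg psi'"
        "is_conditional B K psi c" "is_conditional B K' psi' c'" "c `` {p} = c' `` {p'}"
    | (null) "p \<notin> state_marg psi" "p' \<notin> state_marg psi'"
    unfolding state_sim_def by auto
  then show "to_rel (K, psi, p) `` {()} = to_rel (K', psi', p') `` {()}"
  proof cases
    case marg
    then show ?thesis using is_conditional_Image by metis
  next
    case null
    then show ?thesis using to_rel_Image_empty_iff by (metis (no_types))
  qed
next
  assume eq: "to_rel (K, psi, p) `` {()} = to_rel (K', psi', p') `` {()}"
  obtain b0 where "b0 \<in> B" using \<open>B \<noteq> {}\<close> by auto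
  note c = is_conditional_fibres[OF S \<open>b0 \<in> B\<close>] is_conditional_fibres[OF S' \<open>b0 \<in> B\<close>]
  show "state_sim B (K, psi, p) (K', psi', p')"
  proof (cases "p \<in> state_marg psi")
    case True
    moreover have True': "p' \<in> state_marg psi'"
      using True eq to_rel_Image_empty_iff by (metis (no_types))
    ultimately show ?thesis
      unfolding state_sim_def using c eq
        is_conditional_Image[OF c(1) True] is_conditional_Image[OF c(2) True']
      by blast
  next
    case False
    then have "p' \<notin> state_marg psi'" using eq to_rel_Image_empty_iff by (metis (no_types))
    with False show ?thesis unfolding state_sim_def by simp
  qed
qed

lemma state_sim_iff_to_rel_Image_eq:
  assumes "obs_mor {()} B S" and "obs_mor {()} B S'" and "B \<noteq> {}"
  shows "state_sim B S S' \<longleftrightarrow> to_rel S `` {()} = to_rel S' `` {()}"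
proof -
  obtain K psi p K' psi' p' where "S = (K, psi, p)" and "S' = (K', psi', p')"
    by (cases S, cases S')
  with assms show ?thesis using state_sim_triple_iff by simp
qed

lemma to_rel_observed_state:
  "to_rel (obs_comp (obs_tensor (obs_id A) F) Psi) = to_rel Psi O rel_tensor (Id_on A) (to_rel F)"
  by (simp add: to_rel_obs_comp to_rel_obs_tensor to_rel_obs_id)

lemma obs_approx_iff_to_rel_eq:
  fixes F :: "('k1, 'x, 'y) obs" and G :: "('k2, 'x, 'y) obs"
  assumes cod: "X = {} \<or> Y \<noteq> {}" and F: "obs_mor X Y F" and G: "obs_mor X Y G"
  shows "obs_approx TYPE('a) TYPE('c) X Y F G \<longleftrightarrow> to_rel F = to_rel G"
proof -
  have observed_sim_iff:
    "state_sim (A \<times> Y) (obs_comp (obs_tensor (obs_id A) F) Psi)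
                      (obs_comp (obs_tensor (obs_id A) G) Psi) \<longleftrightarrow>
       (to_rel Psi O rel_tensor (Id_on A) (to_rel F)) `` {()}
         = (to_rel Psi O rel_tensor (Id_on A) (to_rel G)) `` {()}"
    if Psi: "obs_mor {()} (A \<times> X) Psi" for A :: "'a set" and Psi :: "('c, unit, 'a \<times> 'x) obs"
  proof -
    obtain K psi p where "Psi = (K, psi, p)" by (cases Psi)
    with Psi obtain a x where "a \<in> A" "x \<in> X" by (auto simp: obs_mor_iff)
    with cod have "A \<times> Y \<noteq> {}" by auto
    moreover have "obs_mor {()} (A \<times> Y) (obs_comp (obs_tensor (obs_id A) F) Psi)"
      using Psi obs_mor_obs_comp obs_mor_obs_tensor[OF obs_mor_obs_id F] by blast
    moreover have "obs_mor {()} (A \<times> Y) (obs_comp (obs_tensor (obs_id A) G) Psi)"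
      using Psi obs_mor_obs_comp obs_mor_obs_tensor[OF obs_mor_obs_id G] by blast
    ultimately show ?thesis by (simp add: state_sim_iff_to_rel_Image_eq to_rel_observed_state)
  qed
  show ?thesis
  proof
    assume approx: "obs_approx TYPE('a) TYPE('c) X Y F G"
    have "to_rel F `` {x} = to_rel G `` {x}" if "x \<in> X" for x
    proof -
      fix a :: 'a and c :: 'c
      let ?Psi = "({c}, {((), (a, x), c)}, c) :: ('c, unit, 'a \<times> 'x) obs"
      have "obs_mor {()} ({a} \<times> X) ?Psi" using \<open>x \<in> X\<close> unfolding obs_mor_iff by auto
      with approx have "(to_rel ?Psi O rel_tensor (Id_on {a}) (to_rel F)) `` {()}
                      = (to_rel ?Psi O rel_tensor (Id_on {a}) (to_rel G)) `` {()}"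
        unfolding obs_approx_def using observed_sim_iff by blast
      then show ?thesis by (auto simp: to_rel_def rel_tensor_def set_eq_iff)
    qed
    moreover have "to_rel F `` {x} = {} \<and> to_rel G `` {x} = {}" if "x \<notin> X" for x
      using that to_rel_subset[OF F] to_rel_subset[OF G] by blast
    ultimately show "to_rel F = to_rel G" by (metis Image_singleton_iff subrelI subset_antisym)
  next
    assume "to_rel F = to_rel G"
    then show "obs_approx TYPE('a) TYPE('c) X Y F G"
      unfolding obs_approx_def using observed_sim_iff by simp
  qed
qed

theorem proposition6p8:
  fixes X :: "'x set" and Y :: "'y set" and Z :: "'z set"
    and X' :: "'u set" and Y' :: "'v set"
  assumes nonempty_cod: "X = {} \<or> Y \<noteq> {}"
  shows
   "(\<forall>(F :: ('k1, 'x, 'y) obs) (G :: ('k2, 'x, 'y) obs).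
        obs_mor X Y F \<and> obs_mor X Y G \<longrightarrow>
          (obs_approx TYPE('a) TYPE('c) X Y F G \<longleftrightarrow> to_rel F = to_rel G))
    \<and> (\<forall>F :: ('k1, 'x, 'y) obs. obs_mor X Y F \<longrightarrow> to_rel F \<subseteq> X \<times> Y)
    \<and> (\<forall>R'. R' \<subseteq> X \<times> Y \<longrightarrow>
          obs_mor X Y (from_rel X Y R') \<and> to_rel (from_rel X Y R') = R')
    \<and> (\<forall>F :: ('k1, 'x, 'y) obs. obs_mor X Y F \<longrightarrow>
          obs_approx TYPE('a) TYPE('c) X Y (from_rel X Y (to_rel F)) F)
    \<and> to_rel (obs_id X) = Id_on X
    \<and> (\<forall>(F :: ('k1, 'x, 'y) obs) (G :: ('k2, 'y, 'z) obs).
          obs_mor X Y F \<and> obs_mor Y Z G \<longrightarrow> to_rel (obs_comp G F) = to_rel F O to_rel G)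
    \<and> (\<forall>(F :: ('k1, 'x, 'y) obs) (F' :: ('k2, 'u, 'v) obs).
          obs_mor X Y F \<and> obs_mor X' Y' F' \<longrightarrow>
          to_rel (obs_tensor F F') = rel_tensor (to_rel F) (to_rel F'))
    \<and> to_rel (obs_copy X) = {(x, (x, x)) | x. x \<in> X}
    \<and> to_rel (obs_del X) = X \<times> {()}"
proof (intro conjI allI impI)
  fix F :: "('k1, 'x, 'y) obs"
  assume F: "obs_mor X Y F"
  then show "to_rel F \<subseteq> X \<times> Y" by (rule to_rel_subset)
  have "to_rel (from_rel X Y (to_rel F)) = to_rel F"
    using F by (intro to_rel_from_rel to_rel_subset)
  then show "obs_approx TYPE('a) TYPE('c) X Y (from_rel X Y (to_rel F)) F"
    by (simp add: obs_approx_iff_to_rel_eq[OF nonempty_cod obs_mor_from_rel[OF nonempty_cod] F])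
next
  fix F :: "('k1, 'x, 'y) obs" and G :: "('k2, 'x, 'y) obs"
  assume "obs_mor X Y F \<and> obs_mor X Y G"
  then show "obs_approx TYPE('a) TYPE('c) X Y F G \<longleftrightarrow> to_rel F = to_rel G"
    by (elim conjE) (rule obs_approx_iff_to_rel_eq[OF nonempty_cod])
qed (simp_all add: obs_mor_from_rel[OF nonempty_cod] to_rel_from_rel to_rel_obs_id
       to_rel_obs_comp to_rel_obs_tensor to_rel_obs_copy to_rel_obs_del)

end
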